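(* Let $n \ge 2$ be an integer, let $\mathcal{H}$ be a separable Hilbert space, and let $X \subset \mathcal{H}$ be a subset consisting of exactly $n$ points, equipped with the metric induced from $\mathcal{H}$. Then for every $0 < \alpha < 1$ the snowflake space $X^{\alpha}$ cannot be isometrically embedded into the Euclidean space $E^{n-2}$.
   Context: $E^k$ denotes the $k$-dimensional Euclidean space. For a metric space $(X,d)$ and $0<\alpha<1$, the snowflake space $X^{\alpha}$ is the set $X$ equipped with the metric $d^{\alpha}(x,y) = d(x,y)^{\alpha}$. *)

theory Defs
  imports "HOL-Analysis.Analysis"
begin

text \<open>Euclidean space E^k, represented explicitly (so that k may depend on n and k = 0
  is allowed): points are real sequences vanishing from index k on, with the
  standard Euclidean distance on the first k coordinates.\<close>

definition euclid_space :: "nat \<Rightarrow> (nat \<Rightarrow> real) set" where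
  "euclid_space k = {x. \<forall>i\<ge>k. x i = 0}"

definition euclid_dist :: "nat \<Rightarrow> (nat \<Rightarrow> real) \<Rightarrow> (nat \<Rightarrow> real) \<Rightarrow> real" where
  "euclid_dist k x y = sqrt (\<Sum>i<k. (x i - y i)^2)"

definition snowflake_isometric_embedding ::
  "real \<Rightarrow> 'a::metric_space set \<Rightarrow> nat \<Rightarrow> ('a \<Rightarrow> nat \<Rightarrow> real) \<Rightarrow> bool" where
  "snowflake_isometric_embedding \<alpha> X k f \<longleftrightarrow>
     f ` X \<subseteq> euclid_space k \<and>
     (\<forall>x\<in>X. \<forall>y\<in>X. euclid_dist k (f x) (f y) = dist x y powr \<alpha>)"

end

theory Submission
  imports Defs
begin

text \<open>An isometric copy of \<open>X\<^sup>\<alpha>\<close> in \<open>E\<^sup>n\<^sup>-\<^sup>2\<close> consists of n points in an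
  (n-2)-dimensional space, so they are affinely dependent: some weights c, not all zero, satisfy
  \<open>\<Sum>i. c i = 0\<close> and \<open>\<Sum>i. c i \<cdot> y i = 0\<close>, whence \<open>\<Sum>i j. c i c j |y i - y j|\<^sup>2 = 0\<close>.
  But \<open>|y i - y j|\<^sup>2 = |x i - x j|\<^sup>2\<^sup>\<alpha>\<close>, and for distinct points of an inner product space this
  kernel is strictly conditionally negative definite (Schoenberg): writing \<open>t\<^sup>\<alpha>\<close> as a
  positive mixture of the functions \<open>1 - exp (- x t)\<close> reduces it to strict positive
  definiteness of the Gaussian kernel, which follows from the exponential series and the
  positive semidefiniteness of the Hadamard powers of a Gram matrix.\<close>

lemma homogeneous_system_nontrivial_solution:
  fixes v :: "'i \<Rightarrow> nat \<Rightarrow> real"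
  assumes "finite I" "m < card I"
  shows "\<exists>c. (\<exists>i\<in>I. c i \<noteq> 0) \<and> (\<forall>l<m. (\<Sum>i\<in>I. c i * v i l) = 0)"
  using assms
proof (induction m arbitrary: I v)
  case 0
  then show ?case by (intro exI[of _ "\<lambda>_. 1"]) (auto simp: card_gt_0_iff)
next
  case (Suc m)
  show ?case
  proof (cases "\<forall>i\<in>I. v i m = 0")
    case True
    obtain c where "\<exists>i\<in>I. c i \<noteq> 0" "\<forall>l<m. (\<Sum>i\<in>I. c i * v i l) = 0"
      using Suc.IH[of I v] Suc.prems by auto
    with True show ?thesis by (intro exI[of _ c]) (auto simp: less_Suc_eq)
  next
    case False
    then obtain j where j: "j \<in> I" "v j m \<noteq> 0" by auto
    \<comment> \<open>Gaussian elimination: equation m expresses the unknown j through the others.\<close>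
    define w where "w i l = v i l - (v i m / v j m) * v j l" for i l
    have "finite (I - {j})" "m < card (I - {j})" using Suc.prems j by auto
    with Suc.IH obtain d where d: "\<exists>i\<in>I - {j}. d i \<noteq> 0" "\<forall>l<m. (\<Sum>i\<in>I - {j}. d i * w i l) = 0"
      by blast
    define c where "c i = (if i = j then - (\<Sum>i\<in>I - {j}. d i * v i m) / v j m else d i)" for i
    have eliminated: "(\<Sum>i\<in>I. c i * v i l) = (\<Sum>i\<in>I - {j}. d i * w i l)" for l
    proof -
      have "(\<Sum>i\<in>I. c i * v i l) = c j * v j l + (\<Sum>i\<in>I - {j}. d i * v i l)"
        using Suc.prems(1) j by (simp add: sum.remove c_def)
      moreover have "(\<Sum>i\<in>I - {j}. d i * w i l)
          = (\<Sum>i\<in>I - {j}. d i * v i l) - (\<Sum>i\<in>I - {j}. d i * v i m) * (v j l / v j m)"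
        by (simp add: w_def right_diff_distrib sum_subtractf sum_distrib_left sum_divide_distrib mult_ac)
      ultimately show ?thesis using j by (simp add: c_def)
    qed
    have "(\<Sum>i\<in>I. c i * v i l) = 0" if "l < Suc m" for l
    proof (cases "l = m")
      case True
      then show ?thesis using j by (simp add: eliminated w_def)
    next
      case False
      then show ?thesis using d(2) that by (simp add: eliminated)
    qed
    moreover have "\<exists>i\<in>I. c i \<noteq> 0" using d(1) by (auto simp: c_def)
    ultimately show ?thesis by blast
  qed
qed

lemma affine_dependence_exists:
  fixes y :: "'i \<Rightarrow> nat \<Rightarrow> real"
  assumes "finite I" "k + 1 < card I"
  shows "\<exists>c. (\<exists>i\<in>I. c i \<noteq> 0) \<and> sum c I = 0 \<and> (\<forall>l<k. (\<Sum>i\<in>I. c i * y i l) = 0)"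
proof -
  define v where "v i l = (if l = 0 then 1 else y i (l - 1))" for i l
  obtain c where c: "\<exists>i\<in>I. c i \<noteq> 0" "\<forall>l<k + 1. (\<Sum>i\<in>I. c i * v i l) = 0"
    using homogeneous_system_nontrivial_solution[OF assms] by blast
  have "sum c I = 0" using c(2)[rule_format, of 0] by (simp add: v_def)
  moreover have "(\<Sum>i\<in>I. c i * y i l) = 0" if "l < k" for l
    using c(2)[rule_format, of "Suc l"] that by (simp add: v_def)
  ultimately show ?thesis using c(1) by blast
qed

lemma sum_sum_sq_diff:
  fixes c a :: "'i \<Rightarrow> real"
  assumes "sum c I = 0"
  shows "(\<Sum>i\<in>I. \<Sum>j\<in>I. c i * c j * (a i - a j)^2) = - 2 * (\<Sum>i\<in>I. c i * a i)^2"
proof -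
  have left: "(\<Sum>i\<in>I. \<Sum>j\<in>I. c i * (c j * a j^2)) = 0"
    using assms by (simp add: sum_distrib_left[symmetric] sum_distrib_right[symmetric])
  have right: "(\<Sum>i\<in>I. \<Sum>j\<in>I. c j * (c i * a i^2)) = 0"
    using assms by (simp add: sum_distrib_right[symmetric])
  have "(\<Sum>i\<in>I. \<Sum>j\<in>I. c i * c j * (a i - a j)^2)
      = (\<Sum>i\<in>I. \<Sum>j\<in>I. c i * (c j * a j^2) + c j * (c i * a i^2) - 2 * ((c i * a i) * (c j * a j)))"
    by (intro sum.cong refl) (simp add: power2_eq_square algebra_simps)
  also have "\<dots> = (\<Sum>i\<in>I. \<Sum>j\<in>I. c i * (c j * a j^2)) + (\<Sum>i\<in>I. \<Sum>j\<in>I. c j * (c i * a i^2))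
      - 2 * (\<Sum>i\<in>I. \<Sum>j\<in>I. (c i * a i) * (c j * a j))"
    by (simp only: sum.distrib sum_subtractf sum_distrib_left)
  also have "\<dots> = - 2 * (\<Sum>i\<in>I. c i * a i)^2"
    unfolding left right by (simp add: power2_eq_square sum_product)
  finally show ?thesis .
qed

lemma affine_dependence_sum_sqdist:
  fixes y :: "'i \<Rightarrow> nat \<Rightarrow> real"
  assumes "sum c I = 0" "\<forall>l<k. (\<Sum>i\<in>I. c i * y i l) = 0"
  shows "(\<Sum>i\<in>I. \<Sum>j\<in>I. c i * c j * (\<Sum>l<k. (y i l - y j l)^2)) = 0"
proof -
  have "(\<Sum>i\<in>I. \<Sum>j\<in>I. c i * c j * (\<Sum>l<k. (y i l - y j l)^2))
      = (\<Sum>l<k. \<Sum>i\<in>I. \<Sum>j\<in>I. c i * c j * (y i l - y j l)^2)"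
    by (simp add: sum_distrib_left sum.swap[of _ "{..<k}"])
  also have "\<dots> = 0" using assms by (simp add: sum_sum_sq_diff)
  finally show ?thesis .
qed

text \<open>If z e i are coordinates of points p i in an orthonormal basis E, then
  tensor_sqnorm I E z k b is the squared norm of \<open>\<Sum>i. b i p i\<^sup>\<otimes>\<^sup>k\<close>; the closed form
  below shows that the Hadamard powers of the Gram matrix are positive semidefinite.\<close>

primrec tensor_sqnorm :: "'i set \<Rightarrow> 'e set \<Rightarrow> ('e \<Rightarrow> 'i \<Rightarrow> real) \<Rightarrow> nat \<Rightarrow> ('i \<Rightarrow> real) \<Rightarrow> real"
where
  "tensor_sqnorm I E z 0 b = (\<Sum>i\<in>I. b i)^2"
| "tensor_sqnorm I E z (Suc k) b = (\<Sum>e\<in>E. tensor_sqnorm I E z k (\<lambda>i. b i * z e i))"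

lemma tensor_sqnorm_nonneg: "0 \<le> tensor_sqnorm I E z k b"
  by (induction k arbitrary: b) (auto intro: sum_nonneg)

lemma tensor_sqnorm_eq_gram_power:
  "tensor_sqnorm I E z k b = (\<Sum>i\<in>I. \<Sum>j\<in>I. b i * b j * (\<Sum>e\<in>E. z e i * z e j)^k)"
proof (induction k arbitrary: b)
  case 0
  show ?case by (simp add: power2_eq_square sum_product)
next
  case (Suc k)
  have "tensor_sqnorm I E z (Suc k) b
      = (\<Sum>e\<in>E. \<Sum>i\<in>I. \<Sum>j\<in>I. (b i * z e i) * (b j * z e j) * (\<Sum>e\<in>E. z e i * z e j)^k)"
    by (simp add: Suc.IH)
  also have "\<dots> = (\<Sum>i\<in>I. \<Sum>j\<in>I. \<Sum>e\<in>E. (b i * z e i) * (b j * z e j) * (\<Sum>e\<in>E. z e i * z e j)^k)"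
    by (subst sum.swap) (intro sum.cong refl sum.swap)
  also have "\<dots> = (\<Sum>i\<in>I. \<Sum>j\<in>I. b i * b j * (\<Sum>e\<in>E. z e i * z e j)^Suc k)"
    by (intro sum.cong refl) (simp add: sum_distrib_left sum_distrib_right mult_ac)
  finally show ?case .
qed

lemma tensor_sqnorm_scale: "tensor_sqnorm I E z k (\<lambda>i. a * b i) = a^2 * tensor_sqnorm I E z k b"
  by (induction k arbitrary: b)
     (simp_all add: sum_distrib_left[symmetric] power_mult_distrib mult.assoc)

lemma tensor_sqnorm_add_eq_0:
  assumes "finite E" "tensor_sqnorm I E z k u = 0" "tensor_sqnorm I E z k v = 0"
  shows "tensor_sqnorm I E z k (\<lambda>i. u i + v i) = 0"
  using assms(2,3)
proof (induction k arbitrary: u v)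
  case 0
  then show ?case by (simp add: sum.distrib)
next
  case (Suc k)
  then have "\<forall>e\<in>E. tensor_sqnorm I E z k (\<lambda>i. u i * z e i) = 0 \<and> tensor_sqnorm I E z k (\<lambda>i. v i * z e i) = 0"
    using assms(1) by (simp add: sum_nonneg_eq_0_iff tensor_sqnorm_nonneg)
  then show ?case by (simp add: distrib_right Suc.IH)
qed

definition tensor_null :: "'i set \<Rightarrow> 'e set \<Rightarrow> ('e \<Rightarrow> 'i \<Rightarrow> real) \<Rightarrow> ('i \<Rightarrow> real) \<Rightarrow> bool" where
  "tensor_null I E z b \<longleftrightarrow> (\<forall>k. tensor_sqnorm I E z k b = 0)"

definition preserves_tensor_null ::
  "'i set \<Rightarrow> 'e set \<Rightarrow> ('e \<Rightarrow> 'i \<Rightarrow> real) \<Rightarrow> ('i \<Rightarrow> real) \<Rightarrow> bool" where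
  "preserves_tensor_null I E z h \<longleftrightarrow> (\<forall>b. tensor_null I E z b \<longrightarrow> tensor_null I E z (\<lambda>i. b i * h i))"

lemma preserves_tensor_null_const: "preserves_tensor_null I E z (\<lambda>i. a)"
  using tensor_sqnorm_scale[of I E z _ a] by (simp add: preserves_tensor_null_def tensor_null_def mult.commute)

lemma preserves_tensor_null_coordinate:
  assumes "finite E" "e \<in> E"
  shows "preserves_tensor_null I E z (z e)"
  unfolding preserves_tensor_null_def tensor_null_def
proof (intro allI impI)
  fix b k assume "\<forall>k. tensor_sqnorm I E z k b = 0"
  then have "tensor_sqnorm I E z (Suc k) b = 0" by blast
  then show "tensor_sqnorm I E z k (\<lambda>i. b i * z e i) = 0"
    using assms by (simp add: sum_nonneg_eq_0_iff tensor_sqnorm_nonneg)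
qed

lemma preserves_tensor_null_add:
  assumes "finite E" "preserves_tensor_null I E z g" "preserves_tensor_null I E z h"
  shows "preserves_tensor_null I E z (\<lambda>i. g i + h i)"
  unfolding preserves_tensor_null_def tensor_null_def
proof (intro allI impI)
  fix b k assume "\<forall>k. tensor_sqnorm I E z k b = 0"
  then have "tensor_sqnorm I E z k (\<lambda>i. b i * g i) = 0" "tensor_sqnorm I E z k (\<lambda>i. b i * h i) = 0"
    using assms(2,3) unfolding preserves_tensor_null_def tensor_null_def by blast+
  from tensor_sqnorm_add_eq_0[OF assms(1) this]
  show "tensor_sqnorm I E z k (\<lambda>i. b i * (g i + h i)) = 0" by (simp add: distrib_left)
qed

lemma preserves_tensor_null_mult:
  assumes "preserves_tensor_null I E z g" "preserves_tensor_null I E z h"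
  shows "preserves_tensor_null I E z (\<lambda>i. g i * h i)"
  using assms unfolding preserves_tensor_null_def by (simp add: mult.assoc[symmetric])

lemma preserves_tensor_null_prod:
  assumes "finite F" "\<And>f. f \<in> F \<Longrightarrow> preserves_tensor_null I E z (g f)"
  shows "preserves_tensor_null I E z (\<lambda>i. \<Prod>f\<in>F. g f i)"
  using assms
proof (induction rule: finite_induct)
  case empty
  then show ?case using preserves_tensor_null_const[of I E z 1] by simp
next
  case (insert f F)
  then show ?case by (simp add: preserves_tensor_null_mult)
qed

text \<open>The multipliers preserving tensor_null contain the coordinates and form an algebra,
  so they contain a polynomial in the coordinates that vanishes on I exactly off j.\<close>

lemma tensor_null_eq_0:
  fixes z :: "'e \<Rightarrow> 'i \<Rightarrow> real"
  assumes "finite I" "finite E"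
    and separating: "\<And>i j. i \<in> I \<Longrightarrow> j \<in> I \<Longrightarrow> i \<noteq> j \<Longrightarrow> \<exists>e\<in>E. z e i \<noteq> z e j"
    and "tensor_null I E z b" "j \<in> I"
  shows "b j = 0"
proof -
  have "\<forall>i\<in>I - {j}. \<exists>e. e \<in> E \<and> z e j \<noteq> z e i"
    using separating \<open>j \<in> I\<close> by blast
  from bchoice[OF this]
  obtain sep where sep: "\<forall>i\<in>I - {j}. sep i \<in> E \<and> z (sep i) j \<noteq> z (sep i) i"
    by blast
  define h where "h x = (\<Prod>i\<in>I - {j}. z (sep i) x - z (sep i) i)" for x
  have "preserves_tensor_null I E z (\<lambda>x. z (sep i) x + - z (sep i) i)" if "i \<in> I - {j}" for i
  proof (rule preserves_tensor_null_add[OF assms(2)])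
    show "preserves_tensor_null I E z (z (sep i))"
      using sep that assms(2) by (simp add: preserves_tensor_null_coordinate)
  qed (rule preserves_tensor_null_const)
  then have "preserves_tensor_null I E z h"
    unfolding h_def using assms(1) by (intro preserves_tensor_null_prod) auto
  with assms(4) have "tensor_sqnorm I E z 0 (\<lambda>i. b i * h i) = 0"
    unfolding preserves_tensor_null_def tensor_null_def by blast
  moreover have "h i = 0" if "i \<in> I - {j}" for i
    unfolding h_def using that assms(1) by (intro prod_zero) auto
  then have "(\<Sum>i\<in>I. b i * h i) = b j * h j"
    using assms(1,5) by (simp add: sum.remove)
  moreover have "h j \<noteq> 0" using sep assms(1) by (simp add: h_def prod_zero_iff)
  ultimately show ?thesis by simp
qed

lemma exp_gram_strictly_pos_def:
  fixes z :: "'e \<Rightarrow> 'i \<Rightarrow> real"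
  assumes "finite I" "finite E"
    and separating: "\<And>i j. i \<in> I \<Longrightarrow> j \<in> I \<Longrightarrow> i \<noteq> j \<Longrightarrow> \<exists>e\<in>E. z e i \<noteq> z e j"
    and "\<exists>j\<in>I. b j \<noteq> 0" "0 < s"
  shows "0 < (\<Sum>i\<in>I. \<Sum>j\<in>I. b i * b j * exp (s * (\<Sum>e\<in>E. z e i * z e j)))"
proof -
  define G where "G i j = (\<Sum>e\<in>E. z e i * z e j)" for i j
  have series: "(\<lambda>k. s^k / fact k * tensor_sqnorm I E z k b) sums (\<Sum>i\<in>I. \<Sum>j\<in>I. b i * b j * exp (s * G i j))"
  proof -
    have "(\<lambda>k. \<Sum>i\<in>I. \<Sum>j\<in>I. b i * b j * ((s * G i j)^k /\<^sub>R fact k))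
        sums (\<Sum>i\<in>I. \<Sum>j\<in>I. b i * b j * exp (s * G i j))"
      by (intro sums_sum sums_mult exp_converges)
    moreover have "(\<Sum>i\<in>I. \<Sum>j\<in>I. b i * b j * ((s * G i j)^k /\<^sub>R fact k)) = s^k / fact k * tensor_sqnorm I E z k b" for k
    proof -
      have "tensor_sqnorm I E z k b = (\<Sum>i\<in>I. \<Sum>j\<in>I. b i * b j * G i j ^ k)"
        by (simp add: tensor_sqnorm_eq_gram_power G_def)
      then show ?thesis by (simp add: sum_distrib_left power_mult_distrib divide_inverse mult_ac)
    qed
    ultimately show ?thesis by simp
  qed
  obtain j where "j \<in> I" "b j \<noteq> 0" using assms(4) by blast
  then have "\<not> tensor_null I E z b" using tensor_null_eq_0[of I E z b j] assms(1-3) by blast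
  then obtain k where "tensor_sqnorm I E z k b \<noteq> 0" unfolding tensor_null_def by blast
  then have "0 < s^k / fact k * tensor_sqnorm I E z k b"
    using \<open>0 < s\<close> tensor_sqnorm_nonneg[of I E z k b] by simp
  moreover have "0 \<le> s^n / fact n * tensor_sqnorm I E z n b" for n
    using \<open>0 < s\<close> by (simp add: tensor_sqnorm_nonneg)
  ultimately have "0 < suminf (\<lambda>k. s^k / fact k * tensor_sqnorm I E z k b)"
    using sums_summable[OF series] by (intro suminf_pos2) auto
  then show ?thesis using sums_unique[OF series] by (simp add: G_def)
qed

lemma finite_orthonormal_coordinates:
  fixes S :: "'a::real_inner set"
  assumes "finite S"
  obtains B where "finite B" "S \<subseteq> span B"
    "\<And>x y. y \<in> span B \<Longrightarrow> x \<bullet> y = (\<Sum>e\<in>B. (x \<bullet> e) * (y \<bullet> e))"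
proof -
  obtain C where C: "finite C" "span C = span S" "pairwise orthogonal C"
    using basis_orthogonal[OF assms] by blast
  define B where "B = (\<lambda>x. x /\<^sub>R norm x) ` (C - {0})"
  have "finite B" using C(1) by (simp add: B_def)
  have span_B: "span B = span S"
    using span_image_scale[of "C - {0}" "\<lambda>x. inverse (norm x)"] C(1,2) by (simp add: B_def)
  have orth: "pairwise orthogonal B"
  proof (unfold pairwise_def, intro ballI impI)
    fix u v assume "u \<in> B" "v \<in> B" "u \<noteq> v"
    then obtain x y where "x \<in> C" "y \<in> C" "u = x /\<^sub>R norm x" "v = y /\<^sub>R norm y"
      by (auto simp: B_def)
    with \<open>u \<noteq> v\<close> C(3) have "orthogonal x y" by (auto simp: pairwise_def)
    then show "orthogonal u v" by (simp add: \<open>u = _\<close> \<open>v = _\<close> orthogonal_clauses)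
  qed
  have unit: "\<And>e. e \<in> B \<Longrightarrow> norm e = 1"
    by (auto simp: B_def field_simps split: if_splits)
  show ?thesis
  proof (rule that)
    show "finite B" by fact
    show "S \<subseteq> span B" using span_B span_superset by blast
    fix x y assume "y \<in> span B"
    then have "x \<bullet> y = x \<bullet> (\<Sum>e\<in>B. (y \<bullet> e) *\<^sub>R e)"
      using orthonormal_basis_expand[OF orth unit _ \<open>finite B\<close>] by simp
    then show "x \<bullet> y = (\<Sum>e\<in>B. (x \<bullet> e) * (y \<bullet> e))"
      by (simp add: inner_sum_right mult.commute)
  qed
qed

lemma exp_inner_strictly_pos_def:
  fixes p :: "'i \<Rightarrow> 'a::real_inner"
  assumes "finite I" "inj_on p I" "\<exists>j\<in>I. b j \<noteq> 0" "0 < s"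
  shows "0 < (\<Sum>i\<in>I. \<Sum>j\<in>I. b i * b j * exp (s * (p i \<bullet> p j)))"
proof -
  obtain B where B: "finite B" "p ` I \<subseteq> span B"
    and gram: "\<And>x y. y \<in> span B \<Longrightarrow> x \<bullet> y = (\<Sum>e\<in>B. (x \<bullet> e) * (y \<bullet> e))"
    using finite_orthonormal_coordinates[of "p ` I"] assms(1) by blast
  define z where "z e i = p i \<bullet> e" for e i
  have gram_z: "p i \<bullet> p j = (\<Sum>e\<in>B. z e i * z e j)" if "j \<in> I" for i j
    unfolding z_def using B(2) that by (intro gram) auto
  have "\<exists>e\<in>B. z e i \<noteq> z e j" if "i \<in> I" "j \<in> I" "i \<noteq> j" for i j
  proof (rule ccontr)
    assume "\<not> (\<exists>e\<in>B. z e i \<noteq> z e j)"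
    then have "e \<bullet> p i = e \<bullet> p j" if "e \<in> B" for e
      using that by (simp add: z_def inner_commute)
    moreover have "p i \<in> span B" "p j \<in> span B" using B(2) \<open>i \<in> I\<close> \<open>j \<in> I\<close> by auto
    ultimately have "p i = p j" by (metis vector_eq_dot_span)
    with assms(2) that show False by (auto dest: inj_onD)
  qed
  then have "0 < (\<Sum>i\<in>I. \<Sum>j\<in>I. b i * b j * exp (s * (\<Sum>e\<in>B. z e i * z e j)))"
    using exp_gram_strictly_pos_def[OF assms(1) B(1)] assms(3,4) by blast
  also have "\<dots> = (\<Sum>i\<in>I. \<Sum>j\<in>I. b i * b j * exp (s * (p i \<bullet> p j)))"
    by (intro sum.cong refl) (simp add: gram_z)
  finally show ?thesis .
qed

lemma gaussian_strictly_pos_def: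
  fixes p :: "'i \<Rightarrow> 'a::real_inner"
  assumes "finite I" "inj_on p I" "\<exists>j\<in>I. c j \<noteq> 0" "0 < s"
  shows "0 < (\<Sum>i\<in>I. \<Sum>j\<in>I. c i * c j * exp (- (s * (norm (p i - p j))^2)))"
proof -
  define b where "b i = c i * exp (- (s * (norm (p i))^2))" for i
  have "exp (- (s * (norm (p i - p j))^2))
      = exp (- (s * (norm (p i))^2)) * exp (- (s * (norm (p j))^2)) * exp (2 * s * (p i \<bullet> p j))" for i j
  proof -
    have "- (s * (norm (p i - p j))^2) = - (s * (norm (p i))^2) + - (s * (norm (p j))^2) + 2 * s * (p i \<bullet> p j)"
      by (simp add: power2_norm_eq_inner inner_diff_left inner_diff_right inner_commute algebra_simps)
    then show ?thesis by (simp only: exp_add)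
  qed
  then have "(\<Sum>i\<in>I. \<Sum>j\<in>I. c i * c j * exp (- (s * (norm (p i - p j))^2)))
      = (\<Sum>i\<in>I. \<Sum>j\<in>I. b i * b j * exp (2 * s * (p i \<bullet> p j)))"
    by (simp add: b_def mult_ac)
  also have "0 < \<dots>"
    using assms by (intro exp_inner_strictly_pos_def) (auto simp: b_def)
  finally show ?thesis .
qed

text \<open>Substituting \<open>x \<mapsto> x / t\<close> shows that \<open>t powr \<alpha>\<close> is a positive multiple of the integral of
  powr_kernel \<alpha> t, i.e. a positive mixture of the functions \<open>t \<mapsto> 1 - exp (- x * t)\<close>.\<close>

definition powr_kernel :: "real \<Rightarrow> real \<Rightarrow> real \<Rightarrow> real" where
  "powr_kernel \<alpha> t x = indicator {0<..} x * ((1 - exp (- (x * t))) * x powr (- 1 - \<alpha>))"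

lemma powr_kernel_integrable_on_unit_interval:
  assumes "0 < \<alpha>" "\<alpha> < 1"
  shows "set_integrable lebesgue {0<..1} (\<lambda>x::real. (1 - exp (- x)) * x powr (- 1 - \<alpha>))"
  unfolding set_integrable_def
proof (rule Bochner_Integration.integrable_bound [OF _ _ AE_I2])
  show "integrable lebesgue (\<lambda>x. indicat_real {0<..1} x *\<^sub>R x powr (- \<alpha>))"
    using assms
    by (intro nonnegative_absolutely_integrable_1 [unfolded set_integrable_def] integrable_on_powr_from_0') auto
  show "(\<lambda>x. indicat_real {0<..1} x *\<^sub>R ((1 - exp (- x)) * x powr (- 1 - \<alpha>))) \<in> borel_measurable lebesgue"
    by (intro measurable_completion)
       (auto intro!: borel_measurable_continuous_on_indicator continuous_intros)
  fix x :: real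
  show "norm (indicat_real {0<..1} x *\<^sub>R ((1 - exp (- x)) * x powr (- 1 - \<alpha>)))
      \<le> norm (indicat_real {0<..1} x *\<^sub>R x powr (- \<alpha>))"
  proof (cases "x \<in> {0<..1}")
    case True
    then have x: "0 < x" by auto
    have "(1 - exp (- x)) * x powr (- 1 - \<alpha>) \<le> x * x powr (- 1 - \<alpha>)"
      using exp_ge_add_one_self[of "- x"] by (intro mult_right_mono) auto
    also have "x * x powr (- 1 - \<alpha>) = x powr (- \<alpha>)"
      using x by (simp add: powr_mult_base)
    finally show ?thesis using True x by (simp add: abs_mult)
  qed simp
qed

lemma powr_kernel_integrable_on_tail:
  assumes "0 < \<alpha>"
  shows "set_integrable lebesgue {1..} (\<lambda>x::real. (1 - exp (- x)) * x powr (- 1 - \<alpha>))"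
  unfolding set_integrable_def
proof (rule Bochner_Integration.integrable_bound [OF _ _ AE_I2])
  have "(\<lambda>x. x powr (- 1 - \<alpha>)) integrable_on {1..}"
    using has_integral_powr_to_inf[of "- 1 - \<alpha>" 1] assms unfolding integrable_on_def by auto
  then show "integrable lebesgue (\<lambda>x. indicat_real {1..} x *\<^sub>R x powr (- 1 - \<alpha>))"
    by (intro nonnegative_absolutely_integrable_1 [unfolded set_integrable_def]) auto
  show "(\<lambda>x. indicat_real {1..} x *\<^sub>R ((1 - exp (- x)) * x powr (- 1 - \<alpha>))) \<in> borel_measurable lebesgue"
    by (intro measurable_completion)
       (auto intro!: borel_measurable_continuous_on_indicator continuous_intros)
  fix x :: real
  show "norm (indicat_real {1..} x *\<^sub>R ((1 - exp (- x)) * x powr (- 1 - \<alpha>)))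
      \<le> norm (indicat_real {1..} x *\<^sub>R x powr (- 1 - \<alpha>))"
  proof (cases "x \<in> {1..}")
    case True
    then have "0 \<le> 1 - exp (- x)" "1 - exp (- x) \<le> 1" by auto
    then show ?thesis using True by (simp add: abs_mult mult_left_le_one_le)
  qed simp
qed

lemma powr_kernel_integrable_1:
  assumes "0 < \<alpha>" "\<alpha> < 1"
  shows "integrable lebesgue (powr_kernel \<alpha> 1)"
proof -
  have "set_integrable lebesgue ({0<..1} \<union> {1..}) (\<lambda>x::real. (1 - exp (- x)) * x powr (- 1 - \<alpha>))"
    using powr_kernel_integrable_on_unit_interval[OF assms] powr_kernel_integrable_on_tail[OF assms(1)]
    by (rule set_integrable_Un) auto
  moreover have "{0<..1} \<union> {1..} = {0::real<..}" by auto
  ultimately show ?thesis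
    unfolding set_integrable_def powr_kernel_def by (simp add: fun_eq_iff)
qed

lemma powr_kernel_scale:
  assumes "0 < t"
  shows "powr_kernel \<alpha> t (x / t) = t powr (1 + \<alpha>) * powr_kernel \<alpha> 1 x"
proof (cases "0 < x")
  case True
  have "t powr (1 + \<alpha>) * t powr (- 1 - \<alpha>) = 1"
    using assms by (simp add: powr_add[symmetric])
  then have "(x / t) powr (- 1 - \<alpha>) = t powr (1 + \<alpha>) * x powr (- 1 - \<alpha>)"
    using True assms by (simp add: powr_divide divide_simps)
  then show ?thesis using True assms by (simp add: powr_kernel_def)
next
  case False
  then show ?thesis using assms by (simp add: powr_kernel_def divide_simps)
qed

lemma integral_powr_kernel:
  assumes "0 < \<alpha>" "\<alpha> < 1" "0 < t"
  shows "integrable lebesgue (powr_kernel \<alpha> t)"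
    and "integral\<^sup>L lebesgue (powr_kernel \<alpha> t) = t powr \<alpha> * integral\<^sup>L lebesgue (powr_kernel \<alpha> 1)"
proof -
  have c: "1 / t \<noteq> 0" using assms by simp
  have scaled: "powr_kernel \<alpha> t (0 + (1 / t) * x) = t powr (1 + \<alpha>) * powr_kernel \<alpha> 1 x" for x
    using powr_kernel_scale[OF assms(3)] by simp
  have "integrable lebesgue (\<lambda>x. powr_kernel \<alpha> t (0 + (1 / t) * x))"
    unfolding scaled using powr_kernel_integrable_1[OF assms(1,2)] by simp
  then show "integrable lebesgue (powr_kernel \<alpha> t)"
    using lebesgue_integrable_real_affine_iff[OF c, of "powr_kernel \<alpha> t" 0] by simp
  have "integral\<^sup>L lebesgue (powr_kernel \<alpha> t)
      = \<bar>1 / t\<bar> *\<^sub>R (\<integral>x. powr_kernel \<alpha> t (0 + (1 / t) * x) \<partial>lebesgue)"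
    by (rule lebesgue_integral_real_affine[OF c])
  also have "\<dots> = t powr \<alpha> * integral\<^sup>L lebesgue (powr_kernel \<alpha> 1)"
    using assms unfolding scaled by (simp add: powr_add)
  finally show "integral\<^sup>L lebesgue (powr_kernel \<alpha> t) = t powr \<alpha> * integral\<^sup>L lebesgue (powr_kernel \<alpha> 1)" .
qed

lemma integral_pos_of_pos_on_pos_reals:
  fixes f :: "real \<Rightarrow> real"
  assumes "integrable lebesgue f" "\<And>x. 0 \<le> f x" "\<And>x. 0 < x \<Longrightarrow> 0 < f x"
  shows "0 < integral\<^sup>L lebesgue f"
proof -
  have "integral\<^sup>L lebesgue f \<noteq> 0"
  proof
    assume "integral\<^sup>L lebesgue f = 0"
    then have "AE x in lebesgue. f x = 0"
      using integral_nonneg_eq_0_iff_AE[OF assms(1)] assms(2) by simp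
    then have "AE x in lebesgue. x \<notin> {0<..<1::real}"
      by (rule eventually_mono) (use assms(3) in fastforce)
    then have "{0<..<1::real} \<in> null_sets lborel"
      using null_sets_completion_iff[of "{0<..<1::real}" lborel] by (simp add: AE_iff_null_sets)
    then show False by auto
  qed
  moreover have "0 \<le> integral\<^sup>L lebesgue f" using assms(2) by (simp add: integral_nonneg_AE)
  ultimately show ?thesis by simp
qed

lemma integral_powr_kernel_1_pos:
  assumes "0 < \<alpha>" "\<alpha> < 1"
  shows "0 < integral\<^sup>L lebesgue (powr_kernel \<alpha> 1)"
  using powr_kernel_integrable_1[OF assms]
  by (rule integral_pos_of_pos_on_pos_reals) (simp_all add: powr_kernel_def indicator_def)

lemma powr_eq_integral_powr_kernel:
  assumes "0 < \<alpha>" "\<alpha> < 1" "0 \<le> t"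
  shows "integrable lebesgue (powr_kernel \<alpha> t)"
    and "t powr \<alpha> = integral\<^sup>L lebesgue (powr_kernel \<alpha> t) / integral\<^sup>L lebesgue (powr_kernel \<alpha> 1)"
proof -
  have zero: "powr_kernel \<alpha> 0 = (\<lambda>_. 0)" by (simp add: powr_kernel_def fun_eq_iff)
  show "integrable lebesgue (powr_kernel \<alpha> t)"
    using integral_powr_kernel(1)[OF assms(1,2), of t] zero assms(3) by (cases "t = 0") auto
  show "t powr \<alpha> = integral\<^sup>L lebesgue (powr_kernel \<alpha> t) / integral\<^sup>L lebesgue (powr_kernel \<alpha> 1)"
    using integral_powr_kernel(2)[OF assms(1,2), of t] zero integral_powr_kernel_1_pos[OF assms(1,2)] assms(3)
    by (cases "t = 0") auto
qed

lemma powr_sqdist_strictly_cond_neg_def: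
  fixes p :: "'i \<Rightarrow> 'a::real_inner"
  assumes "finite I" "inj_on p I" "\<exists>j\<in>I. c j \<noteq> 0" "sum c I = 0" "0 < \<alpha>" "\<alpha> < 1"
  shows "(\<Sum>i\<in>I. \<Sum>j\<in>I. c i * c j * (dist (p i) (p j) ^ 2) powr \<alpha>) < 0"
proof -
  define t where "t i j = dist (p i) (p j) ^ 2" for i j
  define K where "K = integral\<^sup>L lebesgue (powr_kernel \<alpha> 1)"
  define F where "F x = (\<Sum>i\<in>I. \<Sum>j\<in>I. c i * c j * powr_kernel \<alpha> (t i j) x)" for x
  note kernel = powr_eq_integral_powr_kernel[OF assms(5,6), of "t i j" for i j, unfolded t_def]
  have K: "0 < K" unfolding K_def using assms(5,6) by (rule integral_powr_kernel_1_pos)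
  have "(\<Sum>i\<in>I. \<Sum>j\<in>I. c i * c j * t i j powr \<alpha>)
      = (\<Sum>i\<in>I. \<Sum>j\<in>I. c i * c j * integral\<^sup>L lebesgue (powr_kernel \<alpha> (t i j))) / K"
    using kernel(2) by (simp add: t_def K_def sum_divide_distrib)
  also have "\<dots> = integral\<^sup>L lebesgue F / K"
    unfolding F_def using kernel(1) by (simp add: t_def integral_sum)
  moreover have "integral\<^sup>L lebesgue F < 0"
  proof -
    have cc: "(\<Sum>i\<in>I. \<Sum>j\<in>I. c i * c j) = 0"
      using assms(4) by (simp add: sum_product[symmetric])
    have F_eq: "F x = - ((\<Sum>i\<in>I. \<Sum>j\<in>I. c i * c j * exp (- (x * t i j))) * (indicator {0<..} x * x powr (- 1 - \<alpha>)))"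
      for x
    proof -
      have "F x = (\<Sum>i\<in>I. \<Sum>j\<in>I. c i * c j * (1 - exp (- (x * t i j)))) * (indicator {0<..} x * x powr (- 1 - \<alpha>))"
        by (simp add: F_def powr_kernel_def sum_distrib_left sum_distrib_right mult_ac)
      also have "(\<Sum>i\<in>I. \<Sum>j\<in>I. c i * c j * (1 - exp (- (x * t i j))))
          = - (\<Sum>i\<in>I. \<Sum>j\<in>I. c i * c j * exp (- (x * t i j)))"
        using cc by (simp add: right_diff_distrib sum_subtractf)
      finally show ?thesis by simp
    qed
    have gauss: "0 < (\<Sum>i\<in>I. \<Sum>j\<in>I. c i * c j * exp (- (x * t i j)))" if "0 < x" for x
      using gaussian_strictly_pos_def[OF assms(1-3) that] by (simp add: t_def dist_norm)
    have "0 < integral\<^sup>L lebesgue (\<lambda>x. - F x)"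
    proof (rule integral_pos_of_pos_on_pos_reals)
      show "integrable lebesgue (\<lambda>x. - F x)"
        unfolding F_def using kernel(1) by (simp add: t_def)
      show "0 < - F x" if "0 < x" for x
        using gauss[OF that] that by (simp add: F_eq)
      then show "0 \<le> - F x" for x
        by (cases "0 < x") (auto simp: F_eq less_imp_le)
    qed
    then show ?thesis by simp
  qed
  ultimately show ?thesis using K by (simp add: t_def divide_neg_pos)
qed

lemma snowflake_isometric_embedding_sqdist:
  assumes "snowflake_isometric_embedding \<alpha> X k f" "x \<in> X" "y \<in> X"
  shows "(\<Sum>l<k. (f x l - f y l)^2) = (dist x y ^ 2) powr \<alpha>"
proof -
  have "(\<Sum>l<k. (f x l - f y l)^2) = euclid_dist k (f x) (f y) ^ 2"
    by (simp add: euclid_dist_def sum_nonneg)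
  also have "\<dots> = (dist x y powr \<alpha>) ^ 2"
    using assms by (simp add: snowflake_isometric_embedding_def)
  also have "\<dots> = (dist x y ^ 2) powr \<alpha>"
    by (cases "x = y") (simp_all add: power2_eq_square powr_mult)
  finally show ?thesis .
qed

theorem theorem1:
  fixes X :: "'a::{real_inner, complete_space} set" and n :: nat and \<alpha> :: real
  assumes "n \<ge> 2"
    and "separable_space (euclidean :: 'a topology)"
    and "finite X" and "card X = n"
    and "0 < \<alpha>" and "\<alpha> < 1"
  shows "\<not> (\<exists>f. snowflake_isometric_embedding \<alpha> X (n - 2) f)"
proof
  assume "\<exists>f. snowflake_isometric_embedding \<alpha> X (n - 2) f"
  then obtain f where f: "snowflake_isometric_embedding \<alpha> X (n - 2) f" ..
  have "n - 2 + 1 < card X" using assms(1,4) by simp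
  then obtain c where c: "\<exists>x\<in>X. c x \<noteq> 0" "sum c X = 0" "\<forall>l<n - 2. (\<Sum>x\<in>X. c x * f x l) = 0"
    using affine_dependence_exists[OF assms(3)] by blast
  have "(\<Sum>x\<in>X. \<Sum>y\<in>X. c x * c y * (dist x y ^ 2) powr \<alpha>)
      = (\<Sum>x\<in>X. \<Sum>y\<in>X. c x * c y * (\<Sum>l<n - 2. (f x l - f y l)^2))"
    by (intro sum.cong refl) (simp add: snowflake_isometric_embedding_sqdist[OF f])
  also have "\<dots> = 0"
    using c(2,3) by (rule affine_dependence_sum_sqdist)
  finally have "(\<Sum>x\<in>X. \<Sum>y\<in>X. c x * c y * (dist x y ^ 2) powr \<alpha>) = 0" .
  moreover have "(\<Sum>x\<in>X. \<Sum>y\<in>X. c x * c y * (dist (id x) (id y) ^ 2) powr \<alpha>) < 0"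
    using assms(3,5,6) c(1,2) by (intro powr_sqdist_strictly_cond_neg_def) auto
  ultimately show False by simp
qed

end
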